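(* Let $\mathcal{A}_l\subseteq\mathcal{A}$ be nonempty, let $\alpha=\frac{T_{\mathrm{off}}}{T_{\mathrm{off}}+T}$, let $\pi^*\in\arg\max_{\pi\in\Delta(\mathcal{A}_l)}\log\det\big(V_{(1-\alpha)\pi+\alpha\pi_{\mathrm{off}}}\big)$ and $\tilde\pi^\star=(1-\alpha)\pi^*+\alpha\pi_{\mathrm{off}}$. Then $$d=(1-\alpha)g_{\mathcal{A}_l}(\tilde\pi^\star)+\alpha\sum_{a\in\mathcal{A}}\pi_{\mathrm{off}}(a)\|a\|^2_{V^{-1}_{\tilde\pi^\star}},\qquad (1-\alpha)g_{\mathcal{A}_l}(\tilde\pi^\star)\le d_{\mathrm{eff}},$$ and for every $\pi\in\Delta(\mathcal{A}_l)$, writing $\tilde\pi=(1-\alpha)\pi+\alpha\pi_{\mathrm{off}}$ (with $V_{\tilde\pi}$ invertible), $$d\le(1-\alpha)g_{\mathcal{A}_l}(\tilde\pi)+\alpha\sum_{a\in\mathcal{A}}\pi_{\mathrm{off}}(a)\|a\|^2_{V^{-1}_{\tilde\pi}}.$$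
   Context: $\mathcal{A}\subset\mathbb{R}^d$ is finite with $\mathrm{span}(\mathcal{A})=\mathbb{R}^d$; $\pi_{\mathrm{off}}\in\Delta(\mathcal{A})$ (probability simplex over $\mathcal{A}$); $T,T_{\mathrm{off}}$ are nonnegative integers with $T\ge1$. For $\pi\in\Delta(\mathcal{A})$, $V_\pi=\sum_a\pi(a)aa^\top$, $\|x\|_B=\sqrt{x^\top Bx}$, $g_{\mathcal{B}}(\pi)=\max_{a\in\mathcal{B}}\|a\|^2_{V_\pi^{-1}}$, $\lambda_k(B)$ the $k$-th smallest eigenvalue, and $d_{\mathrm{eff}}=\min\big(\sum_{k=1}^d(1+\frac{T_{\mathrm{off}}}{T}\frac{\lambda_k(V_{\pi_{\mathrm{off}}})}{\max_a\|a\|^2})^{-1},\frac{T}{T_{\mathrm{off}}}g_{\mathcal{A}}(\pi_{\mathrm{off}})\big)$ (the second term being $+\infty$ when undefined). *)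

theory Defs
  imports "HOL-Analysis.Analysis" "HOL-Computational_Algebra.Computational_Algebra"
    "HOL-Library.Extended_Real"
begin

definition prob_simplex :: "'a set \<Rightarrow> ('a \<Rightarrow> real) set" where
  "prob_simplex B = {p. (\<forall>a. 0 \<le> p a) \<and> (\<forall>a. a \<notin> B \<longrightarrow> p a = 0) \<and> sum p B = 1}"

definition outer :: "real^'n \<Rightarrow> real^'n \<Rightarrow> real^'n^'n" where
  "outer x y = (\<chi> i j. x $ i * y $ j)"

definition Vmat :: "(real^'n) set \<Rightarrow> (real^'n \<Rightarrow> real) \<Rightarrow> real^'n^'n" where
  "Vmat A p = (\<Sum>a\<in>A. p a *\<^sub>R outer a a)"

definition wnorm2 :: "real^'n \<Rightarrow> real^'n^'n \<Rightarrow> real" where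
  "wnorm2 x B = x \<bullet> (B *v x)"

definition gfun :: "(real^'n) set \<Rightarrow> (real^'n) set \<Rightarrow> (real^'n \<Rightarrow> real) \<Rightarrow> real" where
  "gfun A B p = Max ((\<lambda>a. wnorm2 a (matrix_inv (Vmat A p))) ` B)"

definition logdet :: "real^'n^'n \<Rightarrow> ereal" where
  "logdet M = (if det M > 0 then ereal (ln (det M)) else -\<infinity>)"

definition charpoly :: "real^'n^'n \<Rightarrow> real poly" where
  "charpoly M = det (\<chi> i j. (if i = j then [:0, 1:] else 0) - [:M $ i $ j:])"

text \<open>lambda_k(M): k-th smallest eigenvalue (k = 1..d), counted with multiplicity.\<close>
definition eig :: "real^'n^'n \<Rightarrow> nat \<Rightarrow> real" where
  "eig M k = sorted_list_of_multiset (proots (charpoly M)) ! (k - 1)"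

definition mix :: "real \<Rightarrow> ('a \<Rightarrow> real) \<Rightarrow> ('a \<Rightarrow> real) \<Rightarrow> 'a \<Rightarrow> real" where
  "mix \<alpha> p q = (\<lambda>a. (1 - \<alpha>) * p a + \<alpha> * q a)"

text \<open>Effective dimension d_eff; the second term is +infinity when undefined
  (T_off = 0 or V_{pi_off} singular).\<close>
definition d_eff :: "(real^'n) set \<Rightarrow> (real^'n \<Rightarrow> real) \<Rightarrow> nat \<Rightarrow> nat \<Rightarrow> ereal" where
  "d_eff A poff T Toff =
     min (ereal (\<Sum>k=1..CARD('n).
            inverse (1 + (real Toff / real T) * eig (Vmat A poff) k / Max ((\<lambda>a. (norm a)\<^sup>2) ` A))))
         (if Toff > 0 \<and> invertible (Vmat A poff)
          then ereal (real T / real Toff * gfun A A poff) else \<infinity>)"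

end

theory Submission
  imports Defs
begin

text \<open>
  Let V be the design matrix of the mixture (1 - \<alpha>) \<pi> + \<alpha> \<pi>_off and X = V^-1. Since
  tr (X V) = d, the dimension splits as (1 - \<alpha>) \<Sum> \<pi>(a) |a|_X^2 + \<alpha> \<Sum> \<pi>_off(a) |a|_X^2, and
  bounding the first average by its maximum g gives the lower bound for every \<pi>. For the
  log-det optimal \<pi>*, the derivative of det along the segment from \<pi>* towards a point mass at a
  is (1 - \<alpha>) det V (|a|_X^2 - \<Sum> \<pi>*(b) |b|_X^2), which cannot be positive; so the average is
  the maximum and the splitting becomes an identity (Kiefer--Wolfowitz).

  Both bounds on (1 - \<alpha>) g come from the Loewner order, which inversion reverses:
  V \<ge> \<alpha> V_off gives \<alpha> |a|_X^2 \<le> |a|^2 in the norm of V_off^-1, and V \<le> (1 - \<alpha>) L I + \<alpha> V_off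
  with L = max |a|^2, evaluated on an orthonormal eigenbasis of V_off, bounds
  \<Sum> \<pi>_off(a) |a|_X^2 = tr (X V_off) from below eigenvalue by eigenvalue. That eigenbasis is
  obtained by maximising the Rayleigh quotient on successive orthogonal complements.
\<close>

section \<open>Spectral theorem for real symmetric matrices\<close>

lemma symmetric_matrix_inner_commute:
  fixes S :: "real^'n^'n"
  assumes "transpose S = S"
  shows "y \<bullet> (S *v x) = x \<bullet> (S *v y)"
proof -
  have "y \<bullet> (S *v x) = (y v* S) \<bullet> x" by (rule dot_lmul_matrix[symmetric])
  also have "y v* S = S *v y" by (metis assms vector_transpose_matrix)
  finally show ?thesis by (simp add: inner_commute)
qed

lemma linear_le_quadratic_imp_zero:
  fixes b c :: real
  assumes "\<And>t. 2 * t * b \<le> t\<^sup>2 * c"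
  shows "b = 0"
proof -
  define k where "k = \<bar>c\<bar> + 1"
  have "k > 0" unfolding k_def by simp
  have "2 * (b / k) * b * k\<^sup>2 \<le> (b / k)\<^sup>2 * c * k\<^sup>2"
    by (rule mult_right_mono[OF assms]) simp
  then have "2 * b * b * k \<le> b * b * c"
    using \<open>k > 0\<close> by (simp add: power2_eq_square field_simps)
  moreover have "b * b * c \<le> b * b * \<bar>c\<bar>" by (simp add: mult_left_mono)
  ultimately have "b * b * (\<bar>c\<bar> + 2) \<le> 0" unfolding k_def by (simp add: algebra_simps)
  then show ?thesis by (smt (verit, best) mult_le_0_iff)
qed

lemma rayleigh_quotient_max_stationary:
  fixes S :: "real^'n^'n"
  assumes sym: "transpose S = S" and W: "subspace W" and x: "x \<in> W" "norm x = 1"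
    and max: "\<And>z. z \<in> W \<Longrightarrow> norm z = 1 \<Longrightarrow> z \<bullet> (S *v z) \<le> x \<bullet> (S *v x)"
    and y: "y \<in> W" "y \<bullet> x = 0"
  shows "y \<bullet> (S *v x) = 0"
proof (rule linear_le_quadratic_imp_zero)
  fix t :: real
  define \<rho> where "\<rho> = x \<bullet> (S *v x)"
  have homogeneous: "z \<bullet> (S *v z) \<le> \<rho> * (z \<bullet> z)" if "z \<in> W" for z
  proof (cases "z = 0")
    case False
    have "(z /\<^sub>R norm z) \<bullet> (S *v (z /\<^sub>R norm z)) \<le> \<rho>"
      unfolding \<rho>_def using False that W by (intro max) (auto simp: subspace_scale)
    then have "(z \<bullet> (S *v z)) / (norm z)\<^sup>2 \<le> \<rho>"
      by (simp add: matrix_vector_mult_scaleR power2_eq_square divide_inverse mult_ac)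
    then show ?thesis
      using False by (simp add: divide_le_eq dot_square_norm mult.commute)
  qed simp
  define z where "z = x + t *\<^sub>R y"
  have "z \<in> W" unfolding z_def using W x y by (simp add: subspace_add subspace_scale)
  then have "z \<bullet> (S *v z) \<le> \<rho> * (z \<bullet> z)" by (rule homogeneous)
  moreover have "x \<bullet> x = 1" using x by (simp add: norm_eq_1)
  moreover have "x \<bullet> (S *v y) = y \<bullet> (S *v x)" by (rule symmetric_matrix_inner_commute[OF sym])
  ultimately show "2 * t * (y \<bullet> (S *v x)) \<le> t\<^sup>2 * (\<rho> * (y \<bullet> y) - y \<bullet> (S *v y))"
    using y(2) unfolding z_def \<rho>_def
    by (simp add: matrix_vector_right_distrib matrix_vector_mult_scaleR inner_add_left
        inner_add_right inner_commute algebra_simps power2_eq_square)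
qed

lemma rayleigh_quotient_max_eigenvector:
  fixes S :: "real^'n^'n"
  assumes sym: "transpose S = S" and W: "subspace W" and inv: "\<And>z. z \<in> W \<Longrightarrow> S *v z \<in> W"
    and x: "x \<in> W" "norm x = 1"
    and max: "\<And>z. z \<in> W \<Longrightarrow> norm z = 1 \<Longrightarrow> z \<bullet> (S *v z) \<le> x \<bullet> (S *v x)"
  shows "S *v x = (x \<bullet> (S *v x)) *\<^sub>R x"
proof -
  define w where "w = S *v x - (x \<bullet> (S *v x)) *\<^sub>R x"
  have "x \<bullet> x = 1" using x by (simp add: norm_eq_1)
  then have wx: "w \<bullet> x = 0" unfolding w_def by (simp add: inner_diff_left inner_commute[of "S *v x"])
  have "w \<in> W" unfolding w_def using W inv x by (simp add: subspace_diff subspace_scale)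
  then have "w \<bullet> (S *v x) = 0" using rayleigh_quotient_max_stationary[OF sym W x max _ wx] by blast
  moreover have "w \<bullet> (S *v x) = w \<bullet> w"
    using wx unfolding w_def by (simp add: inner_diff_right)
  ultimately show ?thesis unfolding w_def by simp
qed

lemma symmetric_invariant_subspace_has_eigenvector:
  fixes S :: "real^'n^'n"
  assumes sym: "transpose S = S" and W: "subspace W" "W \<noteq> {0}"
    and inv: "\<And>z. z \<in> W \<Longrightarrow> S *v z \<in> W"
  obtains x \<mu> where "x \<in> W" "norm x = 1" "S *v x = \<mu> *\<^sub>R x"
proof -
  define K where "K = sphere 0 1 \<inter> W"
  obtain z where "z \<in> W" "z \<noteq> 0" using W(2) subspace_0[OF W(1)] by auto
  then have "z /\<^sub>R norm z \<in> K" unfolding K_def using W(1) by (simp add: subspace_scale)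
  then have "K \<noteq> {}" by blast
  moreover have "compact K" unfolding K_def using W(1) by (intro compact_Int_closed compact_sphere closed_subspace)
  moreover have "continuous_on K (\<lambda>x. x \<bullet> (S *v x))" by (intro continuous_intros)
  ultimately obtain x where "x \<in> K" and "\<And>z. z \<in> K \<Longrightarrow> z \<bullet> (S *v z) \<le> x \<bullet> (S *v x)"
    using continuous_attains_sup[of K "\<lambda>x. x \<bullet> (S *v x)"] by auto
  then have "S *v x = (x \<bullet> (S *v x)) *\<^sub>R x"
    unfolding K_def by (intro rayleigh_quotient_max_eigenvector[OF sym W(1) inv]) auto
  with \<open>x \<in> K\<close> show ?thesis using that unfolding K_def by auto
qed

definition orthonormal_eigenbasis :: "real^'n^'n \<Rightarrow> ('n \<Rightarrow> real^'n) \<Rightarrow> ('n \<Rightarrow> real) \<Rightarrow> bool" where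
  "orthonormal_eigenbasis S v \<mu> \<longleftrightarrow>
     (\<forall>i j. v i \<bullet> v j = (if i = j then 1 else 0)) \<and> (\<forall>j. S *v v j = \<mu> j *\<^sub>R v j)"

lemma symmetric_matrix_orthonormal_eigenbasis:
  fixes S :: "real^'n^'n"
  assumes sym: "transpose S = S"
  obtains v \<mu> where "orthonormal_eigenbasis S v \<mu>"
proof -
  have "\<exists>v \<mu>. (\<forall>i\<in>J. \<forall>j\<in>J. v i \<bullet> v j = (if i = j then 1 else 0)) \<and> (\<forall>j\<in>J. S *v v j = \<mu> j *\<^sub>R v j)"
    for J :: "'n set"
  proof (induction J rule: infinite_finite_induct)
    case (insert i J)
    then obtain v \<mu> where on: "\<forall>i\<in>J. \<forall>j\<in>J. v i \<bullet> v j = (if i = j then 1 else 0)"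
      and ev: "\<forall>j\<in>J. S *v v j = \<mu> j *\<^sub>R v j" by blast
    define W where "W = {y. \<forall>x \<in> v ` J. orthogonal x y}"
    have "subspace W" unfolding W_def by (rule subspace_orthogonal_to_vectors)
    have "dim (v ` J) < DIM(real^'n)"
    proof -
      have "dim (v ` J) \<le> card (v ` J)" using insert(1) by (simp add: dim_le_card')
      also have "\<dots> \<le> card J" using insert(1) by (rule card_image_le)
      also have "\<dots> < card (insert i J)" using insert by simp
      also have "\<dots> \<le> CARD('n)" by (rule card_mono) auto
      finally show ?thesis by simp
    qed
    then obtain z where "z \<noteq> 0" "\<And>y. y \<in> span (v ` J) \<Longrightarrow> orthogonal z y"
      using orthogonal_to_subspace_exists by blast
    then have "z \<in> W" unfolding W_def using orthogonal_commute span_base by blast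
    with \<open>z \<noteq> 0\<close> have "W \<noteq> {0}" by blast
    moreover have "S *v y \<in> W" if "y \<in> W" for y
    proof -
      have "v j \<bullet> (S *v y) = \<mu> j * (v j \<bullet> y)" if "j \<in> J" for j
        using symmetric_matrix_inner_commute[OF sym, of "v j" y] ev that by (simp add: inner_commute)
      then show ?thesis using \<open>y \<in> W\<close> unfolding W_def orthogonal_def by auto
    qed
    ultimately obtain x m where x: "x \<in> W" "norm x = 1" "S *v x = m *\<^sub>R x"
      using symmetric_invariant_subspace_has_eigenvector[OF sym \<open>subspace W\<close>] by blast
    have "x \<bullet> x = 1" using x(2) by (simp add: norm_eq_1)
    moreover have "v j \<bullet> x = 0" "x \<bullet> v j = 0" if "j \<in> J" for j
      using x(1) that unfolding W_def orthogonal_def by (auto simp: inner_commute)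
    ultimately show ?case using on ev x(3) insert(2)
      by (intro exI[of _ "v(i := x)"] exI[of _ "\<mu>(i := m)"]) auto
  qed auto
  from this[of UNIV] show ?thesis using that unfolding orthonormal_eigenbasis_def by auto
qed

lemma orthonormal_eigenbasis_orthogonal_matrix:
  assumes "orthonormal_eigenbasis S v \<mu>"
  shows "orthogonal_matrix (\<chi> r j. v j $ r)"
  using assms unfolding orthonormal_eigenbasis_def orthogonal_matrix
  by (simp add: vec_eq_iff matrix_matrix_mult_def transpose_def inner_vec_def mat_def)

lemma orthonormal_eigenbasis_diagonalizes:
  assumes "orthonormal_eigenbasis S v \<mu>"
  shows "S ** (\<chi> r j. v j $ r) = (\<chi> r j. v j $ r) ** (\<chi> i j. if i = j then \<mu> i else 0)"
proof -
  have "(\<Sum>k\<in>UNIV. S $ r $ k * v j $ k) = \<mu> j * v j $ r" for r j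
    using arg_cong[where f = "\<lambda>y. y $ r", OF assms[unfolded orthonormal_eigenbasis_def, THEN conjunct2, rule_format, of j]]
    by (simp add: matrix_vector_mult_def)
  then show ?thesis
    by (simp add: vec_eq_iff matrix_matrix_mult_def if_distrib if_distribR mult.commute cong: if_cong)
qed

lemma orthonormal_eigenbasis_decomposition:
  assumes "orthonormal_eigenbasis S v \<mu>"
  shows "S = (\<Sum>j\<in>UNIV. \<mu> j *\<^sub>R outer (v j) (v j))"
proof -
  let ?Q = "\<chi> r j. v j $ r" and ?D = "\<chi> i j. if i = j then \<mu> i else (0::real)"
  have "?Q ** transpose ?Q = mat 1"
    using orthonormal_eigenbasis_orthogonal_matrix[OF assms] by (simp add: orthogonal_matrix_def)
  then have "S = (S ** ?Q) ** transpose ?Q" by (simp flip: matrix_mul_assoc)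
  also have "\<dots> = (?Q ** ?D) ** transpose ?Q" by (simp add: orthonormal_eigenbasis_diagonalizes[OF assms])
  also have "\<dots> = (\<Sum>j\<in>UNIV. \<mu> j *\<^sub>R outer (v j) (v j))"
    by (simp add: vec_eq_iff matrix_matrix_mult_def transpose_def outer_def sum_component
        if_distrib[of "\<lambda>z. _ * z"] if_distrib[of "\<lambda>z. z * _"] mult_ac cong del: if_weak_cong)
  finally show ?thesis .
qed

lemma det_orthonormal_eigenbasis:
  assumes "orthonormal_eigenbasis S v \<mu>"
  shows "det S = (\<Prod>j\<in>UNIV. \<mu> j)"
proof -
  let ?Q = "\<chi> r j. v j $ r"
  have "det ?Q \<noteq> 0"
    using det_orthogonal_matrix[OF orthonormal_eigenbasis_orthogonal_matrix[OF assms]] by auto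
  moreover have "det S * det ?Q = det ?Q * (\<Prod>j\<in>UNIV. \<mu> j)"
    using arg_cong[where f = det, OF orthonormal_eigenbasis_diagonalizes[OF assms]]
    by (simp add: det_mul det_diagonal)
  ultimately show ?thesis by simp
qed

lemma mat_vector_mult: "mat c *v x = c *\<^sub>R (x :: real^'n)"
  by (simp add: vec_eq_iff matrix_vector_mult_def mat_def if_distrib[of "\<lambda>z. z * _"] cong del: if_weak_cong)

lemma orthonormal_eigenbasis_shift:
  assumes "orthonormal_eigenbasis S v \<mu>"
  shows "orthonormal_eigenbasis (mat x - S) v (\<lambda>j. x - \<mu> j)"
  using assms unfolding orthonormal_eigenbasis_def
  by (simp add: matrix_vector_mult_diff_rdistrib mat_vector_mult scaleR_diff_left)

lemma poly_charpoly: "poly (charpoly S) x = det (mat x - S)"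
  unfolding charpoly_def det_def
  by (simp add: poly_sum poly_prod mat_def if_distrib[of "\<lambda>p. poly p x"] cong del: if_weak_cong)

lemma charpoly_orthonormal_eigenbasis:
  assumes "orthonormal_eigenbasis S v \<mu>"
  shows "charpoly S = (\<Prod>j\<in>UNIV. [:- \<mu> j, 1:])"
proof -
  have "poly (charpoly S) x = poly (\<Prod>j\<in>UNIV. [:- \<mu> j, 1:]) x" for x
    unfolding poly_charpoly det_orthonormal_eigenbasis[OF orthonormal_eigenbasis_shift[OF assms]]
    by (simp add: poly_prod)
  then show ?thesis by (rule poly_ext)
qed

lemma sum_eig_orthonormal_eigenbasis:
  fixes S :: "real^'n^'n"
  assumes "orthonormal_eigenbasis S v \<mu>"
  shows "(\<Sum>k=1..CARD('n). f (eig S k)) = (\<Sum>j\<in>UNIV. f (\<mu> j))"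
proof -
  define L where "L = sorted_list_of_multiset (proots (charpoly S))"
  have "mset L = (\<Sum>j\<in>UNIV. {#\<mu> j#})"
    unfolding L_def charpoly_orthonormal_eigenbasis[OF assms] by (subst proots_prod) auto
  also have "\<dots> = image_mset \<mu> (mset_set UNIV)"
    by (induction rule: finite_induct[OF finite[of UNIV]]) auto
  finally have L: "mset L = image_mset \<mu> (mset_set UNIV)" .
  have "length L = CARD('n)" using arg_cong[OF L, of size] by simp
  then have "(\<Sum>k=1..CARD('n). f (eig S k)) = sum_list (map f L)"
    unfolding eig_def L_def[symmetric] sum_list_sum_nth
    by (intro sum.reindex_bij_witness[of _ Suc "\<lambda>k. k - 1"]) auto
  also have "\<dots> = sum_mset (image_mset f (mset L))"
    by (simp flip: sum_mset_sum_list mset_map)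
  also have "\<dots> = (\<Sum>j\<in>UNIV. f (\<mu> j))"
    unfolding L sum_unfold_sum_mset[of "\<lambda>j. f (\<mu> j)"] by (simp add: image_mset.compositionality comp_def)
  finally show ?thesis .
qed

section \<open>Inverses, traces and determinants\<close>

lemma matrix_inv_right: "invertible M \<Longrightarrow> M ** matrix_inv M = mat 1"
  and matrix_inv_left: "invertible M \<Longrightarrow> matrix_inv M ** M = mat 1"
  unfolding invertible_def matrix_inv_def by (metis (mono_tags, lifting) someI_ex)+

lemma matrix_diff_ldistrib: "A ** (B - C) = A ** B - A ** (C :: real^'n^'m)"
  by (simp add: vec_eq_iff matrix_matrix_mult_def right_diff_distrib sum_subtractf)

lemma trace_scaleR: "trace (c *\<^sub>R M) = c * trace (M :: real^'n^'n)"
  by (simp add: trace_def sum_distrib_left)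

lemma trace_mult_outer: "trace (X ** outer u u) = wnorm2 u (X :: real^'n^'n)"
  by (simp add: trace_def wnorm2_def outer_def matrix_matrix_mult_def matrix_vector_mult_def
      inner_vec_def sum_distrib_left sum_distrib_right mult_ac)

lemma trace_mult_sum_outer:
  fixes X :: "real^'n^'n"
  assumes "finite I"
  shows "trace (X ** (\<Sum>i\<in>I. c i *\<^sub>R outer (u i) (u i))) = (\<Sum>i\<in>I. c i * wnorm2 (u i) X)"
  using assms
  by (simp add: trace_def wnorm2_def outer_def matrix_matrix_mult_def matrix_vector_mult_def
      inner_vec_def sum_component sum_distrib_left sum_distrib_right mult_ac sum.swap[of _ UNIV I])

lemma trace_mult_orthonormal_eigenbasis:
  assumes "orthonormal_eigenbasis S v \<mu>"
  shows "trace (X ** S) = (\<Sum>j\<in>UNIV. \<mu> j * wnorm2 (v j) X)"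
  by (subst orthonormal_eigenbasis_decomposition[OF assms]) (simp add: trace_mult_sum_outer)

text \<open>The variational formula u' V^-1 u = max_y (2 y' u - y' V y), attained at y = V^-1 u.\<close>

lemma inverse_quadratic_form_ge:
  fixes V X :: "real^'n^'n"
  assumes sym: "transpose V = V" and nonneg: "\<And>z. 0 \<le> z \<bullet> (V *v z)" and VX: "V ** X = mat 1"
  shows "2 * (y \<bullet> u) - y \<bullet> (V *v y) \<le> u \<bullet> (X *v u)"
proof -
  define z where "z = X *v u"
  have Vz: "V *v z = u" unfolding z_def matrix_vector_mul_assoc VX by simp
  have "0 \<le> (y - z) \<bullet> (V *v (y - z))" by (rule nonneg)
  also have "\<dots> = y \<bullet> (V *v y) - 2 * (y \<bullet> (V *v z)) + z \<bullet> (V *v z)"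
    using symmetric_matrix_inner_commute[OF sym, of z y]
    by (simp add: matrix_vector_mult_diff_distrib inner_diff_left inner_diff_right)
  also have "\<dots> = y \<bullet> (V *v y) - 2 * (y \<bullet> u) + u \<bullet> (X *v u)"
    unfolding Vz by (simp add: z_def inner_commute)
  finally show ?thesis by simp
qed

lemma inverse_quadratic_form_ge_reciprocal:
  fixes V X :: "real^'n^'n"
  assumes "transpose V = V" "\<And>z. 0 \<le> z \<bullet> (V *v z)" "V ** X = mat 1"
    and "u \<bullet> u = 1" "u \<bullet> (V *v u) \<le> \<kappa>" "0 < \<kappa>"
  shows "1 / \<kappa> \<le> u \<bullet> (X *v u)"
proof -
  have "2 * ((u /\<^sub>R \<kappa>) \<bullet> u) - (u /\<^sub>R \<kappa>) \<bullet> (V *v (u /\<^sub>R \<kappa>)) \<le> u \<bullet> (X *v u)"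
    by (rule inverse_quadratic_form_ge[OF assms(1-3)])
  then have "2 / \<kappa> - (u \<bullet> (V *v u)) / \<kappa>\<^sup>2 \<le> u \<bullet> (X *v u)"
    using assms(4) by (simp add: matrix_vector_mult_scaleR power2_eq_square divide_inverse mult_ac)
  moreover have "(u \<bullet> (V *v u)) / \<kappa>\<^sup>2 \<le> 1 / \<kappa>"
    using assms(5,6) by (simp add: power2_eq_square divide_le_eq field_simps)
  ultimately show ?thesis by simp
qed

lemma inverse_quadratic_form_antimono:
  fixes V W X Y :: "real^'n^'n"
  assumes "transpose W = W" "\<And>z. 0 \<le> z \<bullet> (W *v z)" "W ** Y = mat 1"
    and VX: "V ** X = mat 1" and le: "\<And>z. z \<bullet> (W *v z) \<le> z \<bullet> (V *v z)"
  shows "a \<bullet> (X *v a) \<le> a \<bullet> (Y *v a)"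
proof -
  define y where "y = X *v a"
  have "y \<bullet> (V *v y) = a \<bullet> (X *v a)"
    unfolding y_def matrix_vector_mul_assoc VX by (simp add: inner_commute)
  then have "y \<bullet> (W *v y) \<le> a \<bullet> (X *v a)" using le[of y] by simp
  moreover have "2 * (y \<bullet> a) - y \<bullet> (W *v y) \<le> a \<bullet> (Y *v a)"
    by (rule inverse_quadratic_form_ge[OF assms(1-3)])
  ultimately show ?thesis unfolding y_def by (simp add: inner_commute)
qed

lemma det_pos_if_nonneg_invertible:
  fixes V :: "real^'n^'n"
  assumes sym: "transpose V = V" and nonneg: "\<And>z. 0 \<le> z \<bullet> (V *v z)" and inv: "invertible V"
  shows "0 < det V"
proof -
  obtain v \<mu> where eb: "orthonormal_eigenbasis V v \<mu>"
    using symmetric_matrix_orthonormal_eigenbasis[OF sym] by blast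
  have "0 < \<mu> j" for j
  proof -
    have vj: "v j \<bullet> v j = 1" "V *v v j = \<mu> j *\<^sub>R v j"
      using eb unfolding orthonormal_eigenbasis_def by auto
    then have "0 \<le> \<mu> j" using nonneg[of "v j"] by simp
    moreover have "\<mu> j \<noteq> 0"
    proof
      assume "\<mu> j = 0"
      then have "matrix_inv V *v (V *v v j) = 0" using vj by simp
      then have "v j = 0" by (simp add: matrix_vector_mul_assoc matrix_inv_left[OF inv])
      then show False using vj by simp
    qed
    ultimately show ?thesis by simp
  qed
  then show ?thesis unfolding det_orthonormal_eigenbasis[OF eb] by (simp add: prod_pos)
qed

lemma det_le_if_logdet_le:
  assumes "0 < det V" "logdet M \<le> logdet V"
  shows "det M \<le> det V"
proof (cases "0 < det M")
  case True
  then show ?thesis using assms unfolding logdet_def by simp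
qed (use assms in simp)

lemma permutes_moves_other:
  assumes "p permutes UNIV" "p \<noteq> id"
  obtains i where "i \<noteq> j" "p i \<noteq> i"
proof -
  obtain k where k: "p k \<noteq> k" using assms(2) by (metis eq_id_iff)
  show ?thesis
  proof (cases "k = j")
    case True
    have "p (p k) \<noteq> p k" using k injD[OF permutes_inj[OF assms(1)]] by metis
    then show ?thesis using that[of "p k"] k True by auto
  next
    case False
    then show ?thesis using that[of k] k by auto
  qed
qed

lemma has_real_derivative_det_mat_1_plus:
  fixes C :: "real^'n^'n"
  shows "((\<lambda>t. det (mat 1 + t *\<^sub>R C)) has_real_derivative trace C) (at 0)"
proof -
  define P where "P = {p. p permutes (UNIV :: 'n set)}"
  define \<delta> :: "'n \<Rightarrow> 'n \<Rightarrow> real" where "\<delta> = (\<lambda>i j. if i = j then 1 else 0)"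
  define D where "D = (\<lambda>p. of_int (sign p) * (\<Sum>j\<in>UNIV. C $ j $ p j * (\<Prod>i\<in>UNIV - {j}. \<delta> i (p i))))"
  have det_eq: "det (mat 1 + t *\<^sub>R C) = (\<Sum>p\<in>P. of_int (sign p) * (\<Prod>i\<in>UNIV. \<delta> i (p i) + t * C $ i $ p i))" for t
    unfolding det_def P_def \<delta>_def by (simp add: mat_def)
  have "((\<lambda>t. of_int (sign p) * (\<Prod>i\<in>UNIV. \<delta> i (p i) + t * C $ i $ p i)) has_real_derivative D p) (at 0)"
    for p
  proof -
    have "((\<lambda>t. \<Prod>i\<in>UNIV. \<delta> i (p i) + t * C $ i $ p i) has_real_derivative
        (\<Sum>j\<in>UNIV. C $ j $ p j * (\<Prod>i\<in>UNIV - {j}. \<delta> i (p i) + 0 * C $ i $ p i))) (at 0)"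
      by (rule has_field_derivative_prod) (auto intro!: derivative_eq_intros)
    then show ?thesis unfolding D_def by (auto intro: DERIV_cmult)
  qed
  then have "((\<lambda>t. det (mat 1 + t *\<^sub>R C)) has_real_derivative (\<Sum>p\<in>P. D p)) (at 0)"
    unfolding det_eq by (intro DERIV_sum) auto
  \<comment> \<open>A permutation other than the identity moves at least two points, so each summand of
    its derivative still contains a vanishing factor.\<close>
  moreover have "D p = 0" if p: "p \<in> P" "p \<noteq> id" for p
  proof -
    have factor_0: "(\<Prod>i\<in>UNIV - {j}. \<delta> i (p i)) = 0" for j
    proof -
      have "p permutes UNIV" "p \<noteq> id" using p unfolding P_def by auto
      then obtain i where "i \<noteq> j" "p i \<noteq> i" by (rule permutes_moves_other)
      then show ?thesis unfolding \<delta>_def by (intro prod_zero) (auto intro!: bexI[of _ i])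
    qed
    show ?thesis unfolding D_def factor_0 by simp
  qed
  then have "(\<Sum>p\<in>P. D p) = (\<Sum>p\<in>{id}. D p)"
    using permutes_id[of UNIV] unfolding P_def by (intro sum.mono_neutral_right) (auto simp: finite_permutations)
  moreover have "D id = trace C" unfolding D_def \<delta>_def trace_def by (simp add: sign_id)
  ultimately show ?thesis by simp
qed

lemma trace_nonpos_if_det_le_1:
  fixes C :: "real^'n^'n"
  assumes "\<And>t. 0 < t \<Longrightarrow> t \<le> 1 \<Longrightarrow> det (mat 1 + t *\<^sub>R C) \<le> 1"
  shows "trace C \<le> 0"
proof (rule ccontr)
  assume "\<not> trace C \<le> 0"
  then have "0 < trace C" by simp
  from DERIV_pos_inc_right[OF has_real_derivative_det_mat_1_plus this]
  obtain d where "0 < d" and inc: "\<And>s. 0 < s \<Longrightarrow> s < d \<Longrightarrow> det (mat 1 + 0 *\<^sub>R C) < det (mat 1 + (0 + s) *\<^sub>R C)"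
    by blast
  define s where "s = min (d / 2) 1"
  have "0 < s" "s < d" "s \<le> 1" using \<open>0 < d\<close> unfolding s_def by auto
  then show False using inc[of s] assms[of s] by simp
qed

section \<open>Designs and design matrices\<close>

lemma prob_simplex_nonneg: "p \<in> prob_simplex B \<Longrightarrow> 0 \<le> p b"
  and prob_simplex_outside: "p \<in> prob_simplex B \<Longrightarrow> b \<notin> B \<Longrightarrow> p b = 0"
  and prob_simplex_sum: "p \<in> prob_simplex B \<Longrightarrow> sum p B = 1"
  unfolding prob_simplex_def by auto

lemma prob_simplex_mono:
  "finite A \<Longrightarrow> B \<subseteq> A \<Longrightarrow> p \<in> prob_simplex B \<Longrightarrow> p \<in> prob_simplex A"
  unfolding prob_simplex_def by (auto simp: sum.mono_neutral_right)

lemma point_mass_in_prob_simplex: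
  "finite B \<Longrightarrow> a \<in> B \<Longrightarrow> (\<lambda>b. if b = a then 1 else 0) \<in> prob_simplex B"
  unfolding prob_simplex_def by auto

lemma mix_nonneg: "0 \<le> \<alpha> \<Longrightarrow> \<alpha> \<le> 1 \<Longrightarrow> 0 \<le> p b \<Longrightarrow> 0 \<le> q b \<Longrightarrow> 0 \<le> mix \<alpha> p q b"
  unfolding mix_def by simp

lemma mix_in_prob_simplex:
  assumes "p \<in> prob_simplex B" "q \<in> prob_simplex B" "0 \<le> t" "t \<le> 1"
  shows "mix t p q \<in> prob_simplex B"
  using assms unfolding prob_simplex_def mix_def
  by (simp add: sum.distrib flip: sum_distrib_left)

lemma sum_mix: "(\<Sum>b\<in>A. mix \<alpha> p q b * f b) = (1 - \<alpha>) * (\<Sum>b\<in>A. p b * f b) + \<alpha> * (\<Sum>b\<in>A. q b * f b)"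
proof -
  have "(\<Sum>b\<in>A. mix \<alpha> p q b * f b) = (\<Sum>b\<in>A. (1 - \<alpha>) * (p b * f b) + \<alpha> * (q b * f b))"
    unfolding mix_def by (simp add: algebra_simps)
  then show ?thesis by (simp add: sum.distrib sum_distrib_left)
qed

lemma sum_prob_simplex_superset:
  assumes "finite A" "B \<subseteq> A" "p \<in> prob_simplex B"
  shows "(\<Sum>b\<in>A. p b * f b) = (\<Sum>b\<in>B. p b * f b)"
  using assms by (intro sum.mono_neutral_right) (auto simp: prob_simplex_outside)

lemma sum_prob_simplex_le_Max:
  assumes "finite B" "p \<in> prob_simplex B"
  shows "(\<Sum>b\<in>B. p b * f b) \<le> Max (f ` B)"
proof -
  have "(\<Sum>b\<in>B. p b * f b) \<le> (\<Sum>b\<in>B. p b * Max (f ` B))"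
    using assms by (intro sum_mono mult_left_mono) (auto simp: prob_simplex_nonneg)
  also have "\<dots> = Max (f ` B)" using assms by (simp add: prob_simplex_sum flip: sum_distrib_right)
  finally show ?thesis .
qed

lemma Vmat_quadratic_form: "y \<bullet> (Vmat A w *v y) = (\<Sum>b\<in>A. w b * (b \<bullet> y)\<^sup>2)"
  unfolding Vmat_def
  by (simp add: matrix_vector_mult_def outer_def inner_vec_def sum_component power2_eq_square
      sum_distrib_left sum_distrib_right mult_ac sum.swap[of _ UNIV A])

lemma transpose_Vmat: "transpose (Vmat A w) = Vmat A w"
  unfolding Vmat_def by (simp add: vec_eq_iff transpose_def outer_def sum_component mult.commute)

lemma Vmat_nonneg:
  assumes "\<And>b. b \<in> A \<Longrightarrow> 0 \<le> w b"
  shows "0 \<le> x \<bullet> (Vmat A w *v x)"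
  unfolding Vmat_quadratic_form using assms by (intro sum_nonneg) simp

lemma det_Vmat_pos:
  fixes A :: "(real^'n) set"
  assumes "\<And>b. b \<in> A \<Longrightarrow> 0 \<le> w b" "invertible (Vmat A w)"
  shows "0 < det (Vmat A w)"
  using assms by (intro det_pos_if_nonneg_invertible transpose_Vmat Vmat_nonneg)

lemma Vmat_mix: "Vmat A (mix \<alpha> p q) = (1 - \<alpha>) *\<^sub>R Vmat A p + \<alpha> *\<^sub>R Vmat A q"
  unfolding Vmat_def mix_def by (simp add: scaleR_add_left sum.distrib scaleR_sum_right)

lemma quadratic_form_Vmat_mix:
  "y \<bullet> (Vmat A (mix \<alpha> p q) *v y) = (1 - \<alpha>) * (y \<bullet> (Vmat A p *v y)) + \<alpha> * (y \<bullet> (Vmat A q *v y))"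
  unfolding Vmat_quadratic_form by (rule sum_mix)

lemma quadratic_form_Vmat_le:
  assumes "p \<in> prob_simplex A" and L: "\<And>a. a \<in> A \<Longrightarrow> (norm a)\<^sup>2 \<le> L"
  shows "y \<bullet> (Vmat A p *v y) \<le> L * (y \<bullet> y)"
proof -
  have "y \<bullet> (Vmat A p *v y) \<le> (\<Sum>b\<in>A. p b * (L * (y \<bullet> y)))"
    unfolding Vmat_quadratic_form
  proof (intro sum_mono mult_left_mono)
    fix b assume "b \<in> A"
    have "(b \<bullet> y)\<^sup>2 \<le> (b \<bullet> b) * (y \<bullet> y)" by (rule Cauchy_Schwarz_ineq)
    also have "\<dots> \<le> L * (y \<bullet> y)" using L[OF \<open>b \<in> A\<close>] by (intro mult_right_mono) (auto simp: dot_square_norm)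
    finally show "(b \<bullet> y)\<^sup>2 \<le> L * (y \<bullet> y)" .
  qed (use assms in \<open>auto simp: prob_simplex_nonneg\<close>)
  also have "\<dots> = L * (y \<bullet> y)" using assms by (simp add: prob_simplex_sum flip: sum_distrib_right)
  finally show ?thesis .
qed

lemma Vmat_point_mass:
  assumes "finite A" "a \<in> A"
  shows "Vmat A (\<lambda>b. if b = a then 1 else 0) = outer a a"
  using assms unfolding Vmat_def by (simp add: if_distrib[of "\<lambda>c. c *\<^sub>R _"] cong del: if_weak_cong)

lemma Vmat_mix_towards_point_mass:
  assumes "finite A" "a \<in> A"
  shows "Vmat A (mix \<alpha> (mix t p (\<lambda>b. if b = a then 1 else 0)) q)
    = Vmat A (mix \<alpha> p q) + (t * (1 - \<alpha>)) *\<^sub>R (outer a a - Vmat A p)"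
  unfolding Vmat_mix Vmat_point_mass[OF assms] by (simp add: algebra_simps)

lemma trace_mult_Vmat:
  assumes "finite A"
  shows "trace (X ** Vmat A w) = (\<Sum>b\<in>A. w b * wnorm2 b X)"
  unfolding Vmat_def using trace_mult_sum_outer[OF assms, of X w "\<lambda>b. b"] .

lemma sum_wnorm2_inverse_Vmat:
  fixes A :: "(real^'n) set"
  assumes "finite A" "invertible (Vmat A w)"
  shows "(\<Sum>b\<in>A. w b * wnorm2 b (matrix_inv (Vmat A w))) = real CARD('n)"
  using matrix_inv_left[OF assms(2)] by (simp add: trace_mult_Vmat[OF assms(1), symmetric] trace_I)

lemma card_eq_mix_sum_wnorm2:
  fixes A :: "(real^'n) set"
  assumes "finite A" "invertible (Vmat A (mix \<alpha> p q))"
  shows "real CARD('n) = (1 - \<alpha>) * (\<Sum>b\<in>A. p b * wnorm2 b (matrix_inv (Vmat A (mix \<alpha> p q))))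
     + \<alpha> * (\<Sum>b\<in>A. q b * wnorm2 b (matrix_inv (Vmat A (mix \<alpha> p q))))"
  using sum_wnorm2_inverse_Vmat[OF assms] unfolding sum_mix by simp

lemma card_le_mixed_gfun:
  fixes A :: "(real^'n) set"
  assumes A: "finite A" "Al \<subseteq> A" and "\<alpha> \<le> 1" and p: "p \<in> prob_simplex Al"
    and inv: "invertible (Vmat A (mix \<alpha> p q))"
  shows "real CARD('n) \<le> (1 - \<alpha>) * gfun A Al (mix \<alpha> p q)
     + \<alpha> * (\<Sum>b\<in>A. q b * wnorm2 b (matrix_inv (Vmat A (mix \<alpha> p q))))"
proof -
  have "finite Al" using A finite_subset by blast
  have "(\<Sum>b\<in>A. p b * wnorm2 b (matrix_inv (Vmat A (mix \<alpha> p q)))) \<le> gfun A Al (mix \<alpha> p q)"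
    unfolding gfun_def sum_prob_simplex_superset[OF A p] by (rule sum_prob_simplex_le_Max[OF \<open>finite Al\<close> p])
  then show ?thesis using card_eq_mix_sum_wnorm2[OF A(1) inv] \<open>\<alpha> \<le> 1\<close> mult_left_mono[of _ _ "1 - \<alpha>"] by force
qed

section \<open>Optimal designs\<close>

lemma logdet_optimal_wnorm2_le_average:
  fixes A Al :: "(real^'n) set"
  assumes A: "finite A" "Al \<subseteq> A" and \<alpha>: "0 \<le> \<alpha>" "\<alpha> < 1"
    and poff: "poff \<in> prob_simplex A" and pstar: "pstar \<in> prob_simplex Al"
    and opt: "\<forall>p\<in>prob_simplex Al. logdet (Vmat A (mix \<alpha> p poff)) \<le> logdet (Vmat A (mix \<alpha> pstar poff))"
    and inv: "invertible (Vmat A (mix \<alpha> pstar poff))"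
    and a: "a \<in> Al"
  shows "wnorm2 a (matrix_inv (Vmat A (mix \<alpha> pstar poff)))
    \<le> (\<Sum>b\<in>A. pstar b * wnorm2 b (matrix_inv (Vmat A (mix \<alpha> pstar poff))))"
proof -
  define V where "V = Vmat A (mix \<alpha> pstar poff)"
  define X where "X = matrix_inv V"
  define C where "C = X ** ((1 - \<alpha>) *\<^sub>R (outer a a - Vmat A pstar))"
  have "a \<in> A" "finite Al" using A a finite_subset by auto
  have "0 < det V" unfolding V_def using \<alpha> poff pstar inv
    by (intro det_Vmat_pos mix_nonneg) (auto simp: prob_simplex_nonneg)
  \<comment> \<open>Moving pstar towards the point mass at a turns V into V (I + t C).\<close>
  have "det (mat 1 + t *\<^sub>R C) \<le> 1" if "0 < t" "t \<le> 1" for t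
  proof -
    define pt where "pt = mix t pstar (\<lambda>b. if b = a then 1 else 0)"
    have "pt \<in> prob_simplex Al"
      unfolding pt_def using pstar a \<open>finite Al\<close> that
      by (intro mix_in_prob_simplex point_mass_in_prob_simplex) auto
    then have "det (Vmat A (mix \<alpha> pt poff)) \<le> det V"
      using opt \<open>0 < det V\<close> unfolding V_def by (intro det_le_if_logdet_le) auto
    moreover have "Vmat A (mix \<alpha> pt poff) = V ** (mat 1 + t *\<^sub>R C)"
      using matrix_inv_right[OF inv]
      unfolding pt_def Vmat_mix_towards_point_mass[OF A(1) \<open>a \<in> A\<close>] C_def X_def V_def
      by (simp add: matrix_add_ldistrib matrix_scalar_ac matrix_mul_assoc flip: scalar_matrix_assoc)
    ultimately show ?thesis using \<open>0 < det V\<close> by (simp add: det_mul)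
  qed
  then have "trace C \<le> 0" by (rule trace_nonpos_if_det_le_1)
  moreover have "trace C = (1 - \<alpha>) * (wnorm2 a X - (\<Sum>b\<in>A. pstar b * wnorm2 b X))"
    unfolding C_def
    by (simp add: matrix_scalar_ac matrix_diff_ldistrib trace_scaleR trace_sub trace_mult_outer
        trace_mult_Vmat[OF A(1)] right_diff_distrib flip: scalar_matrix_assoc)
  ultimately show ?thesis using \<alpha> unfolding X_def V_def by (simp add: mult_le_0_iff)
qed

lemma logdet_optimal_gfun_eq_average:
  fixes A Al :: "(real^'n) set"
  assumes A: "finite A" "Al \<subseteq> A" "Al \<noteq> {}" and \<alpha>: "0 \<le> \<alpha>" "\<alpha> < 1"
    and poff: "poff \<in> prob_simplex A" and pstar: "pstar \<in> prob_simplex Al"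
    and opt: "\<forall>p\<in>prob_simplex Al. logdet (Vmat A (mix \<alpha> p poff)) \<le> logdet (Vmat A (mix \<alpha> pstar poff))"
    and inv: "invertible (Vmat A (mix \<alpha> pstar poff))"
  shows "gfun A Al (mix \<alpha> pstar poff)
    = (\<Sum>b\<in>A. pstar b * wnorm2 b (matrix_inv (Vmat A (mix \<alpha> pstar poff))))"
proof (rule antisym)
  have "finite Al" using A finite_subset by blast
  then show "gfun A Al (mix \<alpha> pstar poff) \<le> (\<Sum>b\<in>A. pstar b * wnorm2 b (matrix_inv (Vmat A (mix \<alpha> pstar poff))))"
    unfolding gfun_def using A(3)
    by (intro Max.boundedI) (auto intro: logdet_optimal_wnorm2_le_average[OF A(1,2) \<alpha> poff pstar opt inv])
  show "(\<Sum>b\<in>A. pstar b * wnorm2 b (matrix_inv (Vmat A (mix \<alpha> pstar poff)))) \<le> gfun A Al (mix \<alpha> pstar poff)"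
    unfolding gfun_def sum_prob_simplex_superset[OF A(1,2) pstar]
    by (rule sum_prob_simplex_le_Max[OF \<open>finite Al\<close> pstar])
qed

section \<open>Comparison with the effective dimension\<close>

lemma wnorm2_inverse_mix_eigenvector_ge:
  fixes A :: "(real^'n) set"
  assumes p: "p \<in> prob_simplex A" and q: "\<And>b. 0 \<le> q b" and \<alpha>: "0 \<le> \<alpha>" "\<alpha> \<le> 1"
    and inv: "invertible (Vmat A (mix \<alpha> p q))" and L: "\<And>a. a \<in> A \<Longrightarrow> (norm a)\<^sup>2 \<le> L"
    and u: "u \<bullet> u = 1" "Vmat A q *v u = \<mu> *\<^sub>R u" and pos: "0 < (1 - \<alpha>) * L + \<alpha> * \<mu>"
  shows "1 / ((1 - \<alpha>) * L + \<alpha> * \<mu>) \<le> wnorm2 u (matrix_inv (Vmat A (mix \<alpha> p q)))"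
  unfolding wnorm2_def
proof (rule inverse_quadratic_form_ge_reciprocal[OF transpose_Vmat _ matrix_inv_right[OF inv] u(1) _ pos])
  show "0 \<le> z \<bullet> (Vmat A (mix \<alpha> p q) *v z)" for z
    using p q \<alpha> by (intro Vmat_nonneg mix_nonneg) (auto simp: prob_simplex_nonneg)
  have "u \<bullet> (Vmat A p *v u) \<le> L" using quadratic_form_Vmat_le[OF p L, of u] u(1) by simp
  then show "u \<bullet> (Vmat A (mix \<alpha> p q) *v u) \<le> (1 - \<alpha>) * L + \<alpha> * \<mu>"
    unfolding quadratic_form_Vmat_mix using u \<alpha> by (simp add: mult_left_mono)
qed

lemma card_minus_offline_le_sum_eig:
  fixes A :: "(real^'n) set"
  assumes A: "finite A" and p: "p \<in> prob_simplex A" and poff: "poff \<in> prob_simplex A"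
    and \<alpha>: "0 \<le> \<alpha>" "\<alpha> < 1" and inv: "invertible (Vmat A (mix \<alpha> p poff))"
    and L: "0 < L" "\<And>a. a \<in> A \<Longrightarrow> (norm a)\<^sup>2 \<le> L"
  shows "real CARD('n) - \<alpha> * (\<Sum>a\<in>A. poff a * wnorm2 a (matrix_inv (Vmat A (mix \<alpha> p poff))))
    \<le> (\<Sum>k=1..CARD('n). (1 - \<alpha>) * L / ((1 - \<alpha>) * L + \<alpha> * eig (Vmat A poff) k))"
proof -
  define X where "X = matrix_inv (Vmat A (mix \<alpha> p poff))"
  obtain v \<mu> where eb: "orthonormal_eigenbasis (Vmat A poff) v \<mu>"
    using symmetric_matrix_orthonormal_eigenbasis[OF transpose_Vmat] by blast
  define \<kappa> where "\<kappa> j = (1 - \<alpha>) * L + \<alpha> * \<mu> j" for j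
  have vj: "v j \<bullet> v j = 1" "Vmat A poff *v v j = \<mu> j *\<^sub>R v j" for j
    using eb unfolding orthonormal_eigenbasis_def by auto
  have \<mu>_nonneg: "0 \<le> \<mu> j" for j
    using Vmat_nonneg[of A poff "v j"] vj[of j] poff by (simp add: prob_simplex_nonneg)
  then have \<kappa>_pos: "0 < \<kappa> j" for j unfolding \<kappa>_def using \<alpha> L(1) by (simp add: add_pos_nonneg)
  have "\<mu> j / \<kappa> j \<le> \<mu> j * wnorm2 (v j) X" for j
    using wnorm2_inverse_mix_eigenvector_ge[OF p _ _ _ inv L(2) vj \<kappa>_pos[unfolded \<kappa>_def]] poff \<alpha>
      mult_left_mono[OF _ \<mu>_nonneg[of j]]
    unfolding X_def \<kappa>_def by (fastforce simp: prob_simplex_nonneg)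
  then have "(\<Sum>j\<in>UNIV. \<mu> j / \<kappa> j) \<le> trace (X ** Vmat A poff)"
    unfolding trace_mult_orthonormal_eigenbasis[OF eb] by (rule sum_mono)
  also have "\<dots> = (\<Sum>a\<in>A. poff a * wnorm2 a X)" by (rule trace_mult_Vmat[OF A])
  finally have "real CARD('n) - \<alpha> * (\<Sum>a\<in>A. poff a * wnorm2 a X)
      \<le> real CARD('n) - \<alpha> * (\<Sum>j\<in>UNIV. \<mu> j / \<kappa> j)"
    using \<alpha> by (simp add: mult_left_mono)
  also have "\<dots> = (\<Sum>j\<in>UNIV. 1 - \<alpha> * (\<mu> j / \<kappa> j))"
    by (simp add: sum_subtractf sum_distrib_left)
  also have "\<dots> = (\<Sum>j\<in>UNIV. (1 - \<alpha>) * L / \<kappa> j)"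
  proof (intro sum.cong refl)
    fix j
    show "1 - \<alpha> * (\<mu> j / \<kappa> j) = (1 - \<alpha>) * L / \<kappa> j"
      using \<kappa>_pos[of j] unfolding \<kappa>_def by (simp add: field_simps)
  qed
  also have "\<dots> = (\<Sum>k=1..CARD('n). (1 - \<alpha>) * L / ((1 - \<alpha>) * L + \<alpha> * eig (Vmat A poff) k))"
    unfolding \<kappa>_def by (rule sum_eig_orthonormal_eigenbasis[OF eb, symmetric])
  finally show ?thesis unfolding X_def .
qed

lemma wnorm2_inverse_mix_le:
  fixes A :: "(real^'n) set"
  assumes \<alpha>: "0 < \<alpha>" "\<alpha> \<le> 1" and p: "\<And>b. 0 \<le> p b" and q: "\<And>b. 0 \<le> q b"
    and inv: "invertible (Vmat A (mix \<alpha> p q))" and invq: "invertible (Vmat A q)"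
  shows "\<alpha> * wnorm2 a (matrix_inv (Vmat A (mix \<alpha> p q))) \<le> wnorm2 a (matrix_inv (Vmat A q))"
proof -
  have "wnorm2 a (matrix_inv (Vmat A (mix \<alpha> p q))) \<le> a \<bullet> ((inverse \<alpha> *\<^sub>R matrix_inv (Vmat A q)) *v a)"
    unfolding wnorm2_def
  proof (rule inverse_quadratic_form_antimono[of "\<alpha> *\<^sub>R Vmat A q"])
    show "transpose (\<alpha> *\<^sub>R Vmat A q) = \<alpha> *\<^sub>R Vmat A q" by (simp add: transpose_scalar transpose_Vmat)
    show "0 \<le> z \<bullet> ((\<alpha> *\<^sub>R Vmat A q) *v z)" for z
      using Vmat_nonneg[of A q z] q \<alpha> by (simp flip: scaleR_matrix_vector_assoc)
    show "(\<alpha> *\<^sub>R Vmat A q) ** (inverse \<alpha> *\<^sub>R matrix_inv (Vmat A q)) = mat 1"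
      using matrix_inv_right[OF invq] \<alpha> by (simp add: matrix_scalar_ac flip: scalar_matrix_assoc)
    show "Vmat A (mix \<alpha> p q) ** matrix_inv (Vmat A (mix \<alpha> p q)) = mat 1" by (rule matrix_inv_right[OF inv])
    show "z \<bullet> ((\<alpha> *\<^sub>R Vmat A q) *v z) \<le> z \<bullet> (Vmat A (mix \<alpha> p q) *v z)" for z
      using Vmat_nonneg[of A p z] p \<alpha> unfolding quadratic_form_Vmat_mix
      by (simp flip: scaleR_matrix_vector_assoc)
  qed
  then show ?thesis using \<alpha> unfolding wnorm2_def by (simp add: field_simps flip: scaleR_matrix_vector_assoc)
qed

lemma mixed_gfun_le_offline_gfun:
  fixes A Al :: "(real^'n) set"
  assumes A: "finite A" "Al \<subseteq> A" "Al \<noteq> {}" and \<alpha>: "0 < \<alpha>" "\<alpha> \<le> 1"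
    and p: "p \<in> prob_simplex Al" and poff: "poff \<in> prob_simplex A"
    and inv: "invertible (Vmat A (mix \<alpha> p poff))" and inv_off: "invertible (Vmat A poff)"
  shows "\<alpha> * gfun A Al (mix \<alpha> p poff) \<le> gfun A A poff"
proof -
  have "finite Al" using A finite_subset by blast
  then have "gfun A Al (mix \<alpha> p poff) \<in> (\<lambda>a. wnorm2 a (matrix_inv (Vmat A (mix \<alpha> p poff)))) ` Al"
    unfolding gfun_def using A(3) by (intro Max_in) auto
  then obtain a where "a \<in> Al"
    and g: "gfun A Al (mix \<alpha> p poff) = wnorm2 a (matrix_inv (Vmat A (mix \<alpha> p poff)))"
    by blast
  have "\<alpha> * gfun A Al (mix \<alpha> p poff) \<le> wnorm2 a (matrix_inv (Vmat A poff))"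
    unfolding g using \<alpha> p poff inv inv_off
    by (intro wnorm2_inverse_mix_le) (auto simp: prob_simplex_nonneg)
  also have "\<dots> \<le> gfun A A poff" unfolding gfun_def using A \<open>a \<in> Al\<close> by (intro Max_ge) auto
  finally show ?thesis .
qed

lemma Max_norm_sq_pos:
  fixes A :: "(real^'n) set"
  assumes "finite A" "span A = UNIV"
  shows "0 < Max ((\<lambda>a. (norm a)\<^sup>2) ` A)"
proof -
  obtain a where "a \<in> A" "a \<noteq> 0"
  proof (rule ccontr)
    assume "\<not> thesis"
    then have "A \<subseteq> {0}" using that by blast
    then have "span A \<subseteq> {0}" by (metis span_empty span_insert_0 span_mono subset_singletonD)
    moreover have "axis undefined 1 \<noteq> (0 :: real^'n)" by (simp add: axis_eq_0_iff)
    ultimately show False using assms(2) by auto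
  qed
  then have "0 < (norm a)\<^sup>2" by simp
  also have "\<dots> \<le> Max ((\<lambda>a. (norm a)\<^sup>2) ` A)" using \<open>a \<in> A\<close> assms(1) by (intro Max_ge) auto
  finally show ?thesis .
qed

lemma mix_weight_ratio_eq_inverse:
  fixes T Toff L m :: real
  assumes "0 < T" "0 \<le> Toff" "0 < L"
  shows "(1 - Toff / (Toff + T)) * L / ((1 - Toff / (Toff + T)) * L + Toff / (Toff + T) * m)
    = inverse (1 + Toff / T * m / L)"
proof -
  have s: "0 < Toff + T" using assms by simp
  then have "1 - Toff / (Toff + T) = T / (Toff + T)" by (simp add: field_simps)
  then have "(1 - Toff / (Toff + T)) * L / ((1 - Toff / (Toff + T)) * L + Toff / (Toff + T) * m)
     = (T * L) / (T * L + Toff * m)"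
    using s by (simp add: add_divide_distrib[symmetric] times_divide_eq_left)
  also have "\<dots> = inverse (1 + Toff / T * m / L)" using assms by (simp add: field_simps inverse_eq_divide)
  finally show ?thesis .
qed

lemma mix_weight_odds:
  fixes T Toff :: real
  assumes "0 < T" "0 < Toff"
  shows "(1 - Toff / (Toff + T)) / (Toff / (Toff + T)) = T / Toff"
proof -
  have s: "0 < Toff + T" using assms by simp
  then have "1 - Toff / (Toff + T) = T / (Toff + T)" by (simp add: field_simps)
  then show ?thesis using s by simp
qed

lemma mixed_gfun_le_d_eff:
  fixes A Al :: "(real^'n) set"
  assumes A: "finite A" "span A = UNIV" "Al \<subseteq> A" "Al \<noteq> {}"
    and poff: "poff \<in> prob_simplex A" and p: "p \<in> prob_simplex Al"
    and T: "T \<ge> 1" and \<alpha>: "\<alpha> = real Toff / (real Toff + real T)"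
    and inv: "invertible (Vmat A (mix \<alpha> p poff))"
    and card_eq: "real CARD('n) = (1 - \<alpha>) * gfun A Al (mix \<alpha> p poff)
           + \<alpha> * (\<Sum>a\<in>A. poff a * wnorm2 a (matrix_inv (Vmat A (mix \<alpha> p poff))))"
  shows "ereal ((1 - \<alpha>) * gfun A Al (mix \<alpha> p poff)) \<le> d_eff A poff T Toff"
proof -
  define L where "L = Max ((\<lambda>a. (norm a)\<^sup>2) ` A)"
  have "0 < L" unfolding L_def by (rule Max_norm_sq_pos[OF A(1,2)])
  have "0 \<le> \<alpha>" "\<alpha> < 1" using T unfolding \<alpha> by auto
  have "(1 - \<alpha>) * gfun A Al (mix \<alpha> p poff)
      \<le> (\<Sum>k=1..CARD('n). (1 - \<alpha>) * L / ((1 - \<alpha>) * L + \<alpha> * eig (Vmat A poff) k))"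
    using card_minus_offline_le_sum_eig[OF A(1) prob_simplex_mono[OF A(1,3) p] poff \<open>0 \<le> \<alpha>\<close> \<open>\<alpha> < 1\<close> inv \<open>0 < L\<close>]
      card_eq unfolding L_def by (force intro: Max_ge A(1))
  also have "\<dots> = (\<Sum>k=1..CARD('n). inverse (1 + (real Toff / real T) * eig (Vmat A poff) k / L))"
    unfolding \<alpha> using T \<open>0 < L\<close> by (intro sum.cong[OF refl] mix_weight_ratio_eq_inverse) auto
  finally have eig_bound: "(1 - \<alpha>) * gfun A Al (mix \<alpha> p poff) \<le> \<dots>" .
  have "(1 - \<alpha>) * gfun A Al (mix \<alpha> p poff) \<le> real T / real Toff * gfun A A poff"
    if "0 < Toff" "invertible (Vmat A poff)"
  proof -
    have "0 < \<alpha>" using that T unfolding \<alpha> by simp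
    have "(1 - \<alpha>) * gfun A Al (mix \<alpha> p poff) = (1 - \<alpha>) / \<alpha> * (\<alpha> * gfun A Al (mix \<alpha> p poff))"
      using \<open>0 < \<alpha>\<close> by simp
    also have "\<dots> \<le> (1 - \<alpha>) / \<alpha> * gfun A A poff"
      using mixed_gfun_le_offline_gfun[OF A(1,3,4) \<open>0 < \<alpha>\<close> _ p poff inv that(2)] \<open>0 < \<alpha>\<close> \<open>\<alpha> < 1\<close>
      by (intro mult_left_mono) auto
    also have "(1 - \<alpha>) / \<alpha> = real T / real Toff"
      unfolding \<alpha> using T that(1) by (intro mix_weight_odds) auto
    finally show ?thesis .
  qed
  then show ?thesis using eig_bound unfolding d_eff_def L_def by auto
qed

theorem lemma4p4:
  fixes A Al :: "(real^'n) set" and poff pstar :: "real^'n \<Rightarrow> real" and T Toff :: nat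
    and \<alpha> :: real
  assumes "finite A" and "span A = UNIV"
    and "poff \<in> prob_simplex A"
    and "T \<ge> 1"
    and "Al \<subseteq> A" and "Al \<noteq> {}"
    and "\<alpha> = real Toff / (real Toff + real T)"
    and "pstar \<in> prob_simplex Al"
    and "\<forall>p\<in>prob_simplex Al. logdet (Vmat A (mix \<alpha> p poff)) \<le> logdet (Vmat A (mix \<alpha> pstar poff))"
    and "invertible (Vmat A (mix \<alpha> pstar poff))"
  shows "real CARD('n) = (1 - \<alpha>) * gfun A Al (mix \<alpha> pstar poff)
           + \<alpha> * (\<Sum>a\<in>A. poff a * wnorm2 a (matrix_inv (Vmat A (mix \<alpha> pstar poff))))
    \<and> ereal ((1 - \<alpha>) * gfun A Al (mix \<alpha> pstar poff)) \<le> d_eff A poff T Toff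
    \<and> (\<forall>p\<in>prob_simplex Al. invertible (Vmat A (mix \<alpha> p poff)) \<longrightarrow>
           real CARD('n) \<le> (1 - \<alpha>) * gfun A Al (mix \<alpha> p poff)
             + \<alpha> * (\<Sum>a\<in>A. poff a * wnorm2 a (matrix_inv (Vmat A (mix \<alpha> p poff)))))"
proof -
  have \<alpha>: "0 \<le> \<alpha>" "\<alpha> < 1" using assms(4,7) by auto
  have card_eq: "real CARD('n) = (1 - \<alpha>) * gfun A Al (mix \<alpha> pstar poff)
      + \<alpha> * (\<Sum>a\<in>A. poff a * wnorm2 a (matrix_inv (Vmat A (mix \<alpha> pstar poff))))"
    using card_eq_mix_sum_wnorm2[OF assms(1,10)]
      logdet_optimal_gfun_eq_average[OF assms(1,5,6) \<alpha> assms(3,8,9,10)] by simp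
  moreover have "ereal ((1 - \<alpha>) * gfun A Al (mix \<alpha> pstar poff)) \<le> d_eff A poff T Toff"
    by (rule mixed_gfun_le_d_eff[OF assms(1,2,5,6,3,8,4,7,10) card_eq])
  moreover have "\<forall>p\<in>prob_simplex Al. invertible (Vmat A (mix \<alpha> p poff)) \<longrightarrow>
      real CARD('n) \<le> (1 - \<alpha>) * gfun A Al (mix \<alpha> p poff)
        + \<alpha> * (\<Sum>a\<in>A. poff a * wnorm2 a (matrix_inv (Vmat A (mix \<alpha> p poff))))"
    using card_le_mixed_gfun[OF assms(1,5)] \<alpha> by auto
  ultimately show ?thesis by blast
qed

end
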